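(* Let $X$ be a real inner product space with $\dim X\ge 2$ and inner product $\langle\cdot,\cdot\rangle$. Then there is no function $f\colon X\to\mathbb{R}$ satisfying $f(x+y)=f(x)f(y)-\langle x,y\rangle$ for all $x,y\in X$. *)

theory Defs
  imports "HOL-Analysis.Analysis"
begin

end

theory Submission
  imports Defs
begin

text \<open>Expanding \<open>f (x + y + z)\<close> in the two ways allowed by associativity gives
  \<open>\<langle>x, y\<rangle> (f z - 1) = \<langle>y, z\<rangle> (f x - 1)\<close>. Taking \<open>x = y = a \<noteq> 0\<close> shows \<open>f w = 1\<close> for every \<open>w\<close>
  orthogonal to \<open>a\<close>, including \<open>w = 0\<close>. If \<open>dim X \<ge> 2\<close> there is such a \<open>w \<noteq> 0\<close>, and then
  \<open>1 = f (w + -w) = f w f (-w) + \<parallel>w\<parallel>\<^sup>2 = 1 + \<parallel>w\<parallel>\<^sup>2\<close>, a contradiction.\<close>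

lemma exists_nonzero_orthogonal_of_independent_pair:
  fixes B :: "'a::real_inner set"
  assumes "independent B" "card B = 2"
  obtains a w :: 'a where "a \<noteq> 0" "w \<noteq> 0" "inner a w = 0"
proof -
  obtain a b where ab: "B = {a, b}" "a \<noteq> b" using assms(2) by (meson card_2_iff)
  have "a \<noteq> 0" using assms(1) ab dependent_zero by blast
  then have aa: "inner a a \<noteq> 0" by simp
  define w where "w = b - (inner a b / inner a a) *\<^sub>R a"
  have "inner a w = 0" unfolding w_def using aa by (simp add: inner_diff_right)
  moreover have "w \<noteq> 0"
  proof
    assume "w = 0"
    then have "b = (inner a b / inner a a) *\<^sub>R a" unfolding w_def by simp
    moreover have "(inner a b / inner a a) *\<^sub>R a \<in> span {a}"
      by (intro span_mul span_base) simp
    ultimately have "b \<in> span {a}" by simp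
    moreover have "B - {b} = {a}" using ab by auto
    ultimately show False using assms(1) ab by (simp add: dependent_def)
  qed
  ultimately show thesis using \<open>a \<noteq> 0\<close> by (intro that)
qed

locale inner_functional_equation =
  fixes f :: "'a::real_inner \<Rightarrow> real"
  assumes add: "f (x + y) = f x * f y - inner x y"
begin

lemma inner_mult_f_sub_one_sym:
  fixes x y z :: 'a
  shows "inner x y * (f z - 1) = inner y z * (f x - 1)"
proof -
  have "f ((x + y) + z) = f (x + (y + z))" by (simp add: add.assoc)
  then have "(f x * f y - inner x y) * f z - inner (x + y) z
      = f x * (f y * f z - inner y z) - inner x (y + z)"
    by (simp only: add)
  then show ?thesis by (simp add: algebra_simps inner_commute)
qed

lemma f_eq_one_if_orthogonal:
  fixes a w :: 'a
  assumes "a \<noteq> 0" "inner a w = 0"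
  shows "f w = 1"
  using inner_mult_f_sub_one_sym [of a a w] assms by simp

lemma orthogonal_eq_zero:
  fixes a w :: 'a
  assumes "a \<noteq> 0" "inner a w = 0"
  shows "w = 0"
proof -
  have "f 0 = 1" "f w = 1" "f (-w) = 1"
    using assms by (simp_all add: f_eq_one_if_orthogonal)
  moreover have "f (w + -w) = f w * f (-w) - inner w (-w)" by (rule add)
  ultimately show "w = 0" by simp
qed

end

theorem mainTheorem8:
  assumes "\<exists>B :: 'a::real_inner set. independent B \<and> card B = 2"
  shows "\<not> (\<exists>f :: 'a \<Rightarrow> real. \<forall>x y. f (x + y) = f x * f y - inner x y)"
proof
  assume "\<exists>f :: 'a \<Rightarrow> real. \<forall>x y. f (x + y) = f x * f y - inner x y"
  then obtain f :: "'a \<Rightarrow> real" where "inner_functional_equation f"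
    by (auto intro: inner_functional_equation.intro)
  obtain B :: "'a set" where "independent B" "card B = 2" using assms by blast
  then obtain a w :: 'a where "a \<noteq> 0" "w \<noteq> 0" "inner a w = 0"
    by (rule exists_nonzero_orthogonal_of_independent_pair)
  then show False
    using inner_functional_equation.orthogonal_eq_zero [OF \<open>inner_functional_equation f\<close>] by blast
qed

end
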